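(* Let $A$ and $B$ be nonzero integers, let $g=\gcd(A,B)$, and write $A=ga$, $B=gb$ (so $\gcd(a,b)=1$). For an integer $L\ge 2$, let $\ell=\prod_{p\nmid g}p^{\nu_p(L)}$ and $\gamma(L)=\max_{p\mid g}\left\lceil \nu_p(L)/\nu_p(g)\right\rceil$ (with $\gamma(L)=0$ if $g=1$). Then the following are equivalent: (1) $L\in G_{(A,B)}$; (2) there exists a positive integer $\kappa\ge \gamma(L)$ with $\ell\mid(a^{\kappa}+b^{\kappa})$; (3) $\ell\in G_{(a,b)}$.
   Context: For nonzero integers $x,y$, $G_{(x,y)}$ denotes the set of positive integers $n$ for which there exists a positive integer $k$ with $n\mid(x^k+y^k)$ ("good integers" with respect to $x$ and $y$). For a prime $p$ and a nonzero integer $n$, $\nu_p(n)$ is the $p$-adic valuation (exponent of $p$ in $n$). Products and maxima indexed by $p$ range over primes. $\lceil x\rceil$ is the least integer $\ge x$. *)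

theory Defs
  imports Complex_Main "HOL-Computational_Algebra.Primes"
begin

definition good :: "int \<Rightarrow> int \<Rightarrow> nat set" where
  "good x y = {n. n > 0 \<and> (\<exists>k>0. int n dvd x ^ k + y ^ k)}"

definition ell_part :: "nat \<Rightarrow> nat \<Rightarrow> nat" where
  "ell_part g L = (\<Prod>p\<in>{p\<in>prime_factors L. \<not> p dvd g}. p ^ multiplicity p L)"

definition gamma_exp :: "nat \<Rightarrow> nat \<Rightarrow> nat" where
  "gamma_exp g L = Max (insert 0
     {nat \<lceil>real (multiplicity p L) / real (multiplicity p g)\<rceil> | p. prime p \<and> p dvd g})"

end

theory Submission imports Defs "HOL-Number_Theory.Cong" begin

text \<open>
  Since \<open>A\<^sup>k + B\<^sup>k = g\<^sup>k (a\<^sup>k + b\<^sup>k)\<close> and \<open>\<ell>\<close> is the part of \<open>L\<close> coprime to \<open>g\<close>,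
  \<open>L \<bar> A\<^sup>k + B\<^sup>k\<close> forces \<open>\<ell> \<bar> a\<^sup>k + b\<^sup>k\<close>. Conversely, \<open>\<kappa> \<ge> \<gamma>(L)\<close> is exactly what makes
  \<open>g\<^sup>\<kappa>\<close> absorb the part of \<open>L\<close> supported on the primes of \<open>g\<close>, so \<open>L \<bar> \<ell> g\<^sup>\<kappa>\<close>, and
  \<open>\<ell> \<bar> a\<^sup>\<kappa> + b\<^sup>\<kappa>\<close> then gives \<open>L \<bar> A\<^sup>\<kappa> + B\<^sup>\<kappa>\<close>. Finally an exponent \<open>k\<close> with
  \<open>\<ell> \<bar> a\<^sup>k + b\<^sup>k\<close> can be made as large as needed by passing to an odd multiple of it,
  because \<open>x + y \<bar> x\<^sup>t + y\<^sup>t\<close> for odd \<open>t\<close>.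
\<close>

lemma sum_dvd_odd_power_sum:
  fixes x y :: int
  assumes "odd t"
  shows "x + y dvd x ^ t + y ^ t"
proof -
  have "[x = -y] (mod (x + y))" by (simp add: cong_iff_dvd_diff)
  then have "[x ^ t + y ^ t = (-y) ^ t + y ^ t] (mod (x + y))"
    by (intro cong_add cong_pow) simp_all
  then show ?thesis using assms by (simp add: cong_0_iff)
qed

lemma power_sum_dvd_large_exponent:
  fixes x y :: int
  assumes "k > 0" and "n dvd x ^ k + y ^ k"
  obtains \<kappa> :: nat where "\<kappa> > 0" and "\<kappa> \<ge> m" and "n dvd x ^ \<kappa> + y ^ \<kappa>"
proof
  let ?t = "2 * m + 1"
  show "k * ?t > 0" using assms(1) by simp
  have "1 * ?t \<le> k * ?t" using assms(1) by (intro mult_le_mono1) simp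
  then show "k * ?t \<ge> m" by simp
  have "x ^ k + y ^ k dvd (x ^ k) ^ ?t + (y ^ k) ^ ?t"
    by (rule sum_dvd_odd_power_sum) simp
  with assms(2) show "n dvd x ^ (k * ?t) + y ^ (k * ?t)"
    by (simp only: power_mult dvd_trans)
qed

lemma ell_part_pos: "ell_part G L > 0"
  unfolding ell_part_def by (intro prod_pos) (auto dest: prime_gt_0_nat in_prime_factors_imp_prime)

lemma multiplicity_ell_part:
  assumes "prime p"
  shows "multiplicity p (ell_part G L) = (if p dvd G then 0 else multiplicity p L)"
  unfolding ell_part_def using assms
  by (subst multiplicity_prod_prime_powers)
     (auto dest: in_prime_factors_imp_prime simp: in_prime_factors_iff not_dvd_imp_multiplicity_0)

lemma ell_part_dvd: "L > 0 \<Longrightarrow> ell_part G L dvd L"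
  using ell_part_pos by (intro multiplicity_le_imp_dvd) (auto simp: multiplicity_ell_part)

lemma coprime_ell_part: "coprime (ell_part G L) G"
  unfolding ell_part_def
  by (auto intro!: prod_coprime_left simp: coprime_power_left_iff prime_imp_coprime
      dest: in_prime_factors_imp_prime)

lemma multiplicity_le_gamma_exp_mult:
  assumes "G > 0" and "prime p" and "p dvd G" and "\<kappa> \<ge> gamma_exp G L"
  shows "multiplicity p L \<le> \<kappa> * multiplicity p G"
proof -
  let ?q = "real (multiplicity p L) / real (multiplicity p G)"
  have "finite {p. prime p \<and> p dvd G}"
    by (rule finite_subset[of _ "{..G}"]) (auto dest: dvd_imp_le simp: assms(1))
  then have "nat \<lceil>?q\<rceil> \<le> gamma_exp G L"
    unfolding gamma_exp_def using assms(2,3) by (intro Max_ge) auto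
  with assms(4) have "?q \<le> real \<kappa>" by linarith
  moreover have "multiplicity p G > 0"
    using assms by (simp add: prime_multiplicity_gt_zero_iff)
  ultimately have "real (multiplicity p L) \<le> real \<kappa> * real (multiplicity p G)"
    by (simp add: divide_le_eq)
  then show ?thesis by (simp flip: of_nat_mult)
qed

lemma dvd_ell_part_mult_power:
  assumes "G > 0" and "L > 0" and "\<kappa> \<ge> gamma_exp G L"
  shows "L dvd ell_part G L * G ^ \<kappa>"
proof (rule multiplicity_le_imp_dvd)
  fix p :: nat
  assume p: "prime p"
  have "multiplicity p (ell_part G L * G ^ \<kappa>) =
      multiplicity p (ell_part G L) + \<kappa> * multiplicity p G"
    using p assms(1) ell_part_pos
    by (simp add: prime_elem_multiplicity_mult_distrib prime_elem_multiplicity_power_distrib)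
  then show "multiplicity p L \<le> multiplicity p (ell_part G L * G ^ \<kappa>)"
    using multiplicity_le_gamma_exp_mult[OF assms(1) p _ assms(3)]
    by (simp add: multiplicity_ell_part[OF p])
qed (use assms in simp)

lemma scaled_power_sum: "(g * a) ^ k + (g * b) ^ k = g ^ k * (a ^ k + b ^ k)" for g a b :: int
  by (simp add: power_mult_distrib algebra_simps)

lemma good_scaled_imp_good_ell_part:
  fixes a b :: int and G L :: nat
  assumes "L \<in> good (int G * a) (int G * b)"
  shows "ell_part G L \<in> good a b"
proof -
  obtain k where k: "k > 0" "int L dvd (int G * a) ^ k + (int G * b) ^ k"
    using assms unfolding good_def by auto
  have "int (ell_part G L) dvd int L"
    using ell_part_dvd assms unfolding good_def by simp
  with k(2) have "int (ell_part G L) dvd int G ^ k * (a ^ k + b ^ k)"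
    by (metis scaled_power_sum dvd_trans)
  moreover have "coprime (int (ell_part G L)) (int G ^ k)"
    using coprime_ell_part by simp
  ultimately have "int (ell_part G L) dvd a ^ k + b ^ k"
    using coprime_dvd_mult_right_iff by blast
  with k(1) ell_part_pos show ?thesis unfolding good_def by auto
qed

lemma good_ell_part_imp_large_exponent:
  assumes "ell_part G L \<in> good a b"
  obtains \<kappa> :: nat where "\<kappa> > 0" and "\<kappa> \<ge> gamma_exp G L"
    and "int (ell_part G L) dvd a ^ \<kappa> + b ^ \<kappa>"
  using assms unfolding good_def by (auto elim: power_sum_dvd_large_exponent)

lemma large_exponent_imp_good_scaled:
  fixes a b :: int and G L \<kappa> :: nat
  assumes "G > 0" and "L > 0" and "\<kappa> > 0" and "\<kappa> \<ge> gamma_exp G L"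
    and "int (ell_part G L) dvd a ^ \<kappa> + b ^ \<kappa>"
  shows "L \<in> good (int G * a) (int G * b)"
proof -
  have "int L dvd int (ell_part G L) * int G ^ \<kappa>"
    using dvd_ell_part_mult_power[OF assms(1,2,4)] by (metis of_nat_dvd_iff of_nat_mult of_nat_power)
  also have "\<dots> dvd int G ^ \<kappa> * (a ^ \<kappa> + b ^ \<kappa>)"
    using assms(5) by (simp add: mult.commute)
  finally show ?thesis
    using assms(2,3) unfolding good_def by (auto simp: scaled_power_sum)
qed

theorem theorem3p4:
  fixes A B a b g :: int and L :: nat
  assumes "A \<noteq> 0" and "B \<noteq> 0"
    and "g = gcd A B" and "A = g * a" and "B = g * b"
    and "L \<ge> 2"
  shows "(L \<in> good A B \<longleftrightarrow>
            (\<exists>\<kappa>::nat. \<kappa> > 0 \<and> \<kappa> \<ge> gamma_exp (nat g) L \<and>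
               int (ell_part (nat g) L) dvd a ^ \<kappa> + b ^ \<kappa>))
       \<and> (L \<in> good A B \<longleftrightarrow> ell_part (nat g) L \<in> good a b)"
proof -
  define G where "G = nat g"
  have g: "g = int G" and "G > 0"
    using assms(1,3) by (auto simp: G_def)
  have AB: "A = int G * a" "B = int G * b"
    using assms(4,5) g by simp_all
  have "L \<in> good A B \<Longrightarrow> ell_part G L \<in> good a b"
    unfolding AB by (rule good_scaled_imp_good_ell_part)
  moreover have "ell_part G L \<in> good a b \<Longrightarrow> \<exists>\<kappa>::nat. \<kappa> > 0 \<and> \<kappa> \<ge> gamma_exp G L \<and>
      int (ell_part G L) dvd a ^ \<kappa> + b ^ \<kappa>"
    by (elim good_ell_part_imp_large_exponent) blast
  moreover have "L \<in> good A B" if "\<kappa> > 0" "\<kappa> \<ge> gamma_exp G L"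
      "int (ell_part G L) dvd a ^ \<kappa> + b ^ \<kappa>" for \<kappa>
    unfolding AB using \<open>G > 0\<close> assms(6) that by (intro large_exponent_imp_good_scaled) auto
  ultimately show ?thesis unfolding G_def by blast
qed

end
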